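(* For every $n\ge2$, consider all plane trees on $n$ vertices and, in each, all pairs $(u,\ell)$ with $\ell$ a leaf that is a proper descendant of the vertex $u$. Then: - the total number of such pairs is $4^{n-2}$; - the total of $d(u,\ell)$ over all such pairs is $\frac{(2n-3)!}{2((n-2)!)^2}+\frac{4^{n-2}}{2}$. Hence the expected length of such a path, chosen uniformly, is $$\frac{(2n-3)!!}{2\,(2n-4)!!}+\frac12=\sqrt{\frac n\pi}+\frac12+O\Bigl(\frac1{\sqrt n}\Bigr).$$
   Context: General (plane) trees are rooted trees in which each vertex may have any number of children, linearly ordered. The size of a tree is its number of vertices, and a leaf is a vertex with no children. $d(u,w)$ is the number of edges of the path between $u$ and $w$. The double factorials are $(2m)!!=2\cdot4\cdots(2m)$ and $(2m-1)!!=1\cdot3\cdots(2m-1)$, with $0!!=1$. *)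

theory Defs
  imports "HOL-Analysis.Analysis" "HOL-Library.Landau_Symbols" "HOL-Library.Sublist"
begin

datatype ptree = Node "ptree list"

text \<open>Vertices of a plane tree, addressed by their path from the root:
  the root is [], and the j-th child (0-based) of vertex p is p @ [j].\<close>
function positions :: "ptree \<Rightarrow> nat list set" where
  "positions (Node ts) =
     insert [] (\<Union>(i, s) \<in> set (zip [0..<length ts] ts). (Cons i) ` positions s)"
  by pat_completeness auto
termination
proof (relation "Wellfounded.measure size")
  fix ts and x :: "nat \<times> ptree" and i s
  assume "x \<in> set (zip [0..<length ts] ts)" "(i, s) = x"
  then have "s \<in> set ts" by (auto dest: set_zip_rightD)
  then have "size s \<le> size_list size ts" by (rule size_list_estimation') simp
  then show "(s, Node ts) \<in> Wellfounded.measure size" by simp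
qed simp

definition tsize :: "ptree \<Rightarrow> nat" where
  "tsize t = card (positions t)"

text \<open>A leaf is a vertex without children (i.e. it has no first child).\<close>
definition is_leaf :: "ptree \<Rightarrow> nat list \<Rightarrow> bool" where
  "is_leaf t p \<longleftrightarrow> p \<in> positions t \<and> p @ [0] \<notin> positions t"

definition proper_desc :: "nat list \<Rightarrow> nat list \<Rightarrow> bool" where
  "proper_desc u w \<longleftrightarrow> strict_prefix u w"

definition anc_leaf_pairs :: "ptree \<Rightarrow> (nat list \<times> nat list) set" where
  "anc_leaf_pairs t = {(u, l). u \<in> positions t \<and> is_leaf t l \<and> proper_desc u l}"

definition tdist :: "nat list \<Rightarrow> nat list \<Rightarrow> nat" where
  "tdist u w = length w - length u"

definition trees_of_size :: "nat \<Rightarrow> ptree set" where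
  "trees_of_size n = {t. tsize t = n}"

fun dfact :: "nat \<Rightarrow> nat" where
  "dfact 0 = 1"
| "dfact (Suc 0) = 1"
| "dfact (Suc (Suc n)) = Suc (Suc n) * dfact n"

end

(*
  Cutting a plane tree at the first child of its root writes it as a pair (c, r) of smaller
  trees, so tree statistics satisfy quadratic recursions. The number of ancestor-leaf pairs of a
  tree is the sum of its leaf depths d, and their total distance is the sum of d (d + 1) / 2;
  such leaf-depth sums have generating functions that are linear over the Catalan series
  C = X + C^2. As (1 - 2 C)^2 = 1 - 4 X, the series 1 - 2 C is the reciprocal of the central
  binomial series B = sum binom(2n, n) X^n, and B^2 = sum 4^n X^n by Vandermonde's identity at
  -1/2. Solving the linear equations gives the coefficients 4^(n-2) and
  ((2n - 3) binom(2n - 4, n - 2) + 4^(n-2)) / 2. Finally binom(2m, m) / 4^m is squeezed between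
  two monotone sequences converging to the Wallis limit, which gives the square-root asymptotics.
*)

theory Submission
  imports Defs "HOL-Computational_Algebra.Formal_Power_Series" "HOL-Real_Asymp.Real_Asymp"
begin

unbundle no vec_syntax
unbundle fps_syntax

section \<open>Splitting a plane tree at the first child of its root\<close>

lemma positions_Node: "positions (Node ts) = insert [] (\<Union>i<length ts. Cons i ` positions (ts ! i))"
  by (auto simp: set_zip)

lemma Cons_in_positions_iff: "i # q \<in> positions (Node ts) \<longleftrightarrow> i < length ts \<and> q \<in> positions (ts ! i)"
  unfolding positions_Node by auto

lemma Nil_in_positions [simp]: "[] \<in> positions t"
  by (cases t) simp

lemma finite_positions [simp]: "finite (positions t)"
proof (induction t)
  case (Node ts)
  then show ?case unfolding positions_Node by auto
qed

lemma positions_prefix_closed: "q @ s \<in> positions t \<Longrightarrow> q \<in> positions t"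
proof (induction q arbitrary: t)
  case (Cons i q)
  then show ?case by (cases t) (auto simp: Cons_in_positions_iff)
qed simp

lemma tsize_ge_1: "tsize t \<ge> 1"
  using card_gt_0_iff[of "positions t"] Nil_in_positions[of t] by (fastforce simp: tsize_def)

lemma tsize_single_vertex [simp]: "tsize (Node []) = 1"
  by (simp add: tsize_def)

fun children :: "ptree \<Rightarrow> ptree list" where
  "children (Node ts) = ts"

definition add_first_child :: "ptree \<Rightarrow> ptree \<Rightarrow> ptree" where
  "add_first_child c r = Node (c # children r)"

lemma Node_children [simp]: "Node (children r) = r"
  by (cases r) simp

lemma add_first_child_inject: "add_first_child c r = add_first_child c' r' \<longleftrightarrow> c = c' \<and> r = r'"
  unfolding add_first_child_def by (metis Node_children list.inject ptree.inject)

lemma ptree_first_child_cases: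
  obtains "t = Node []" | c r where "t = add_first_child c r"
proof (cases t)
  case (Node ts)
  then show ?thesis
    using that(2)[of _ "Node (tl ts)"] that(1) by (cases ts) (auto simp: add_first_child_def)
qed

text \<open>The root children of r move one place to the right when c is added in front.\<close>

fun shift_head :: "nat list \<Rightarrow> nat list" where
  "shift_head [] = []"
| "shift_head (i # q) = Suc i # q"

lemma length_shift_head [simp]: "length (shift_head p) = length p"
  by (cases p) auto

lemma inj_on_shift_head: "inj_on shift_head (A - {[]})"
proof (rule inj_onI)
  fix x y assume "x \<in> A - {[]}" "y \<in> A - {[]}" "shift_head x = shift_head y"
  then show "x = y" by (cases x; cases y) auto
qed

lemma in_shift_head_image_iff: "p \<in> shift_head ` (A - {[]}) \<longleftrightarrow> (\<exists>i q. p = Suc i # q \<and> i # q \<in> A)"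
proof
  assume "p \<in> shift_head ` (A - {[]})"
  then obtain x where "x \<in> A" "x \<noteq> []" "p = shift_head x" by blast
  then show "\<exists>i q. p = Suc i # q \<and> i # q \<in> A" by (cases x) auto
next
  assume "\<exists>i q. p = Suc i # q \<and> i # q \<in> A"
  then obtain i q where "p = Suc i # q" "i # q \<in> A" by blast
  then show "p \<in> shift_head ` (A - {[]})" by (intro image_eqI[of _ _ "i # q"]) auto
qed

lemma Cons_0_image_disjoint_shift_head_image:
  "Cons 0 ` A \<inter> shift_head ` (B - {[]}) = {}"
  unfolding disjoint_iff in_shift_head_image_iff by blast

lemma in_positions_add_first_child_iff:
  "p \<in> positions (add_first_child c r) \<longleftrightarrow>
     p = [] \<or> (\<exists>q. p = 0 # q \<and> q \<in> positions c) \<or> (\<exists>i q. p = Suc i # q \<and> i # q \<in> positions r)"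
proof (cases p)
  case (Cons i q)
  have "i # q \<in> positions (add_first_child c r) \<longleftrightarrow>
      i < Suc (length (children r)) \<and> q \<in> positions ((c # children r) ! i)"
    unfolding add_first_child_def by (subst Cons_in_positions_iff) simp
  also have "\<dots> \<longleftrightarrow> (i = 0 \<and> q \<in> positions c) \<or> (\<exists>j. i = Suc j \<and> j # q \<in> positions r)"
    by (cases i) (auto simp: Cons_in_positions_iff[of _ _ "children r", simplified])
  finally show ?thesis
    using Cons by auto
qed (simp add: add_first_child_def)

lemma positions_add_first_child:
  "positions (add_first_child c r) =
     insert [] (Cons 0 ` positions c \<union> shift_head ` (positions r - {[]}))"
proof -
  have "p \<in> Cons 0 ` A \<longleftrightarrow> (\<exists>q. p = 0 # q \<and> q \<in> A)" for p and A :: "nat list set"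
    by auto
  then show ?thesis
    unfolding set_eq_iff in_positions_add_first_child_iff insert_iff Un_iff in_shift_head_image_iff
    by blast
qed

lemma tsize_add_first_child: "tsize (add_first_child c r) = tsize c + tsize r"
proof -
  have "[] \<notin> Cons 0 ` positions c \<union> shift_head ` (positions r - {[]})"
    by (auto simp: in_shift_head_image_iff)
  then have "tsize (add_first_child c r) =
      Suc (card (Cons 0 ` positions c) + card (shift_head ` (positions r - {[]})))"
    by (simp add: tsize_def positions_add_first_child card_Un_disjoint
        Cons_0_image_disjoint_shift_head_image)
  also have "\<dots> = Suc (tsize c + (tsize r - 1))"
    by (simp add: tsize_def card_image inj_on_shift_head)
  finally show ?thesis
    using tsize_ge_1[of r] by simp
qed

lemma trees_of_size_0: "trees_of_size 0 = {}"
proof -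
  have "tsize t \<noteq> 0" for t
    using tsize_ge_1[of t] by linarith
  then show ?thesis by (simp add: trees_of_size_def)
qed

lemma trees_of_size_1: "trees_of_size (Suc 0) = {Node []}"
proof -
  have "t = Node []" if "tsize t = 1" for t
  proof (cases t rule: ptree_first_child_cases)
    case (2 c r)
    then show ?thesis
      using that tsize_ge_1[of c] tsize_ge_1[of r] by (simp add: tsize_add_first_child)
  qed
  then show ?thesis by (auto simp: trees_of_size_def)
qed

definition first_child_splittings :: "nat \<Rightarrow> (nat \<times> ptree \<times> ptree) set" where
  "first_child_splittings n = (SIGMA k:{1..<n}. trees_of_size k \<times> trees_of_size (n - k))"

lemma trees_of_size_eq_image_splittings:
  assumes "n \<ge> 2"
  shows "trees_of_size n = (\<lambda>(k, c, r). add_first_child c r) ` first_child_splittings n"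
proof (intro equalityI subsetI)
  fix t assume t: "t \<in> trees_of_size n"
  then obtain c r where "t = add_first_child c r"
    using assms by (cases t rule: ptree_first_child_cases) (auto simp: trees_of_size_def)
  moreover have "(tsize c, c, r) \<in> first_child_splittings n"
    using t calculation tsize_ge_1[of c] tsize_ge_1[of r]
    by (auto simp: first_child_splittings_def trees_of_size_def tsize_add_first_child)
  ultimately show "t \<in> (\<lambda>(k, c, r). add_first_child c r) ` first_child_splittings n"
    by force
qed (auto simp: first_child_splittings_def trees_of_size_def tsize_add_first_child)

lemma finite_trees_of_size: "finite (trees_of_size n)"
proof (induction n rule: less_induct)
  case (less n)
  show ?case
  proof (cases "n \<ge> 2")
    case True
    have "finite (first_child_splittings n)"
      unfolding first_child_splittings_def using less by (intro finite_SigmaI) auto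
    then show ?thesis
      by (simp add: trees_of_size_eq_image_splittings[OF True])
  next
    case False
    then consider "n = 0" | "n = Suc 0" by linarith
    then show ?thesis by cases (simp_all add: trees_of_size_0 trees_of_size_1)
  qed
qed

lemma sum_trees_of_size_split:
  assumes "n \<ge> 2"
  shows "(\<Sum>t\<in>trees_of_size n. F t) =
    (\<Sum>k\<in>{1..<n}. \<Sum>c\<in>trees_of_size k. \<Sum>r\<in>trees_of_size (n - k). F (add_first_child c r))"
proof -
  have "inj_on (\<lambda>(k, c, r). add_first_child c r) (first_child_splittings n)"
    by (rule inj_onI) (auto simp: first_child_splittings_def add_first_child_inject trees_of_size_def)
  then have "(\<Sum>t\<in>trees_of_size n. F t) =
      (\<Sum>(k, c, r)\<in>first_child_splittings n. F (add_first_child c r))"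
    by (simp add: trees_of_size_eq_image_splittings[OF assms] sum.reindex split_def)
  also have "\<dots> = (\<Sum>k\<in>{1..<n}. \<Sum>c\<in>trees_of_size k. \<Sum>r\<in>trees_of_size (n - k). F (add_first_child c r))"
    unfolding first_child_splittings_def
    by (subst sum.Sigma[symmetric]) (simp_all add: sum.cartesian_product finite_trees_of_size split_def)
  finally show ?thesis .
qed

section \<open>Leaf-depth sums and ancestor-leaf pairs\<close>

definition leaves :: "ptree \<Rightarrow> nat list set" where
  "leaves t = {p. is_leaf t p}"

lemma finite_leaves [simp]: "finite (leaves t)"
  by (rule finite_subset[of _ "positions t"]) (auto simp: leaves_def is_leaf_def)

lemma leaves_single_vertex: "leaves (Node []) = {[]}"
  by (auto simp: leaves_def is_leaf_def)

lemma Nil_in_leaves_iff: "[] \<in> leaves r \<longleftrightarrow> r = Node []"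
  using Cons_in_positions_iff[of 0 "[]" "children r"]
  by (cases r) (auto simp: leaves_def is_leaf_def)

lemma leaves_add_first_child:
  "leaves (add_first_child c r) = Cons 0 ` leaves c \<union> shift_head ` (leaves r - {[]})"
proof (rule set_eqI)
  fix p
  have "[0] \<in> positions (add_first_child c r)"
    by (simp add: in_positions_add_first_child_iff)
  then show "p \<in> leaves (add_first_child c r) \<longleftrightarrow> p \<in> Cons 0 ` leaves c \<union> shift_head ` (leaves r - {[]})"
    by (cases p rule: list.exhaust[case_product nat.exhaust[of "hd p"]])
      (auto simp: leaves_def is_leaf_def in_shift_head_image_iff in_positions_add_first_child_iff)
qed

definition leaf_depth_sum :: "(nat \<Rightarrow> real) \<Rightarrow> ptree \<Rightarrow> real" where
  "leaf_depth_sum g t = (\<Sum>p\<in>leaves t. g (length p))"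

lemma leaf_depth_sum_single_vertex: "leaf_depth_sum g (Node []) = g 0"
  by (simp add: leaf_depth_sum_def leaves_single_vertex)

lemma leaf_depth_sum_add: "leaf_depth_sum (\<lambda>d. g d + h d) t = leaf_depth_sum g t + leaf_depth_sum h t"
  by (simp add: leaf_depth_sum_def sum.distrib)

lemma leaf_depth_sum_add_first_child:
  "leaf_depth_sum g (add_first_child c r) =
     leaf_depth_sum (\<lambda>d. g (Suc d)) c + leaf_depth_sum g r - (if r = Node [] then g 0 else 0)"
proof -
  have "leaf_depth_sum g (add_first_child c r) =
      (\<Sum>p\<in>Cons 0 ` leaves c. g (length p)) + (\<Sum>p\<in>shift_head ` (leaves r - {[]}). g (length p))"
    unfolding leaf_depth_sum_def leaves_add_first_child
    by (rule sum.union_disjoint) (simp_all add: Cons_0_image_disjoint_shift_head_image)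
  also have "(\<Sum>p\<in>Cons 0 ` leaves c. g (length p)) = leaf_depth_sum (\<lambda>d. g (Suc d)) c"
    by (simp add: leaf_depth_sum_def sum.reindex)
  also have "(\<Sum>p\<in>shift_head ` (leaves r - {[]}). g (length p)) = (\<Sum>p\<in>leaves r - {[]}. g (length p))"
    by (simp add: sum.reindex inj_on_shift_head)
  also have "\<dots> = leaf_depth_sum g r - (if r = Node [] then g 0 else 0)"
    by (simp add: leaf_depth_sum_def sum_diff1 Nil_in_leaves_iff)
  finally show ?thesis by simp
qed

lemma strict_prefixes_eq_take_image: "{u. strict_prefix u l} = (\<lambda>k. take k l) ` {..<length l}"
proof (rule set_eqI)
  fix u
  show "u \<in> {u. strict_prefix u l} \<longleftrightarrow> u \<in> (\<lambda>k. take k l) ` {..<length l}"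
  proof
    assume "u \<in> {u. strict_prefix u l}"
    then have "prefix u l" "length u < length l"
      by (auto simp: strict_prefix_def prefix_length_less)
    then show "u \<in> (\<lambda>k. take k l) ` {..<length l}"
      by (intro image_eqI[of _ _ "length u"]) (auto simp: prefix_def)
  qed (auto simp: strict_prefix_def take_is_prefix)
qed

lemma inj_on_take_lessThan_length: "inj_on (\<lambda>k. take k l) {..<length l}"
  by (rule inj_onI) (metis lessThan_iff length_take min.absorb4 less_imp_le)

lemma anc_leaf_pairs_eq:
  "anc_leaf_pairs t = (\<lambda>(l, u). (u, l)) ` (SIGMA l:leaves t. {u. strict_prefix u l})"
proof -
  have "u \<in> positions t" if "strict_prefix u l" "l \<in> leaves t" for u l
    using that by (auto simp: leaves_def is_leaf_def strict_prefix_def prefix_def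
        intro: positions_prefix_closed)
  then show ?thesis
    by (auto simp: anc_leaf_pairs_def leaves_def proper_desc_def)
qed

lemma sum_anc_leaf_pairs:
  "(\<Sum>(u, l)\<in>anc_leaf_pairs t. f u l) = (\<Sum>l\<in>leaves t. \<Sum>k<length l. f (take k l) l)"
proof -
  have "inj_on (\<lambda>(l, u). (u, l)) X" for X :: "(nat list \<times> nat list) set"
    by (rule inj_onI) auto
  then have "(\<Sum>(u, l)\<in>anc_leaf_pairs t. f u l) =
      (\<Sum>(l, u)\<in>(SIGMA l:leaves t. {u. strict_prefix u l}). f u l)"
    unfolding anc_leaf_pairs_eq by (simp add: sum.reindex comp_def split_def)
  also have "\<dots> = (\<Sum>l\<in>leaves t. \<Sum>u\<in>{u. strict_prefix u l}. f u l)"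
    by (rule sum.Sigma[symmetric]) (simp_all add: strict_prefixes_eq_take_image)
  also have "\<dots> = (\<Sum>l\<in>leaves t. \<Sum>k<length l. f (take k l) l)"
    by (simp add: strict_prefixes_eq_take_image sum.reindex inj_on_take_lessThan_length)
  finally show ?thesis .
qed

lemma card_anc_leaf_pairs: "real (card (anc_leaf_pairs t)) = leaf_depth_sum real t"
  using sum_anc_leaf_pairs[of "\<lambda>_ _. 1::nat" t] by (simp add: leaf_depth_sum_def)

lemma double_sum_lessThan_diff: "2 * (\<Sum>k<n. n - k) = n * (n + 1 :: nat)"
  by (induction n) (simp_all add: sum.lessThan_Suc_shift del: sum.lessThan_Suc)

lemma sum_tdist_anc_leaf_pairs:
  "real (\<Sum>(u, l)\<in>anc_leaf_pairs t. tdist u l) = leaf_depth_sum (\<lambda>d. real d * (real d + 1) / 2) t"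
proof -
  have "real (\<Sum>k<length l. tdist (take k l) l) = real (length l) * (real (length l) + 1) / 2" for l
  proof -
    have "(\<Sum>k<length l. tdist (take k l) l) = (\<Sum>k<length l. length l - k)"
      by (intro sum.cong) (auto simp: tdist_def)
    then show ?thesis
      using arg_cong[OF double_sum_lessThan_diff[of "length l"], of real]
      by (simp only: of_nat_simps)
  qed
  then show ?thesis
    unfolding sum_anc_leaf_pairs leaf_depth_sum_def of_nat_sum[of _ "leaves t"]
    by (intro sum.cong refl)
qed

section \<open>Generating functions of tree statistics\<close>

definition tree_gf :: "(ptree \<Rightarrow> real) \<Rightarrow> real fps" where
  "tree_gf F = Abs_fps (\<lambda>n. \<Sum>t\<in>trees_of_size n. F t)"

lemma tree_gf_nth: "tree_gf F $ n = (\<Sum>t\<in>trees_of_size n. F t)"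
  by (simp add: tree_gf_def)

lemma tree_gf_diff: "tree_gf (\<lambda>t. F t - G t) = tree_gf F - tree_gf G"
  by (rule fps_ext) (simp add: tree_gf_nth sum_subtractf)

lemma tree_gf_add: "tree_gf (\<lambda>t. F t + G t) = tree_gf F + tree_gf G"
  by (rule fps_ext) (simp add: tree_gf_nth sum.distrib)

lemma tree_gf_single_vertex_indicator: "tree_gf (\<lambda>t. if t = Node [] then a else 0) = fps_const a * fps_X"
proof (rule fps_ext)
  fix n
  consider "n = 0" | "n = Suc 0" | "n \<ge> 2" by linarith
  then show "tree_gf (\<lambda>t. if t = Node [] then a else 0) $ n = (fps_const a * fps_X) $ n"
  proof cases
    case 3
    then have "t \<noteq> Node []" if "t \<in> trees_of_size n" for t
      using that by (auto simp: trees_of_size_def)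
    then show ?thesis using 3 by (simp add: tree_gf_nth)
  qed (simp_all add: tree_gf_nth trees_of_size_0 trees_of_size_1)
qed

lemma fps_mult_nth_vanishing_at_0:
  fixes f g :: "'a::comm_semiring_1 fps"
  assumes "f $ 0 = 0" "g $ 0 = 0"
  shows "(f * g) $ n = (\<Sum>i\<in>{1..<n}. f $ i * g $ (n - i))"
proof (cases "n = 0")
  case False
  then have "{0..n} = insert 0 (insert n {1..<n})" by auto
  then show ?thesis
    using assms False by (simp add: fps_mult_nth sum.insert_if)
qed (simp add: fps_mult_nth assms)

lemma tree_gf_bilinear_rec:
  assumes "\<And>c r. F (add_first_child c r) = G1 c * K1 r + G2 c * K2 r"
  shows "tree_gf F = fps_const (F (Node [])) * fps_X + tree_gf G1 * tree_gf K1 + tree_gf G2 * tree_gf K2"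
proof (rule fps_ext)
  fix n
  have gf0: "tree_gf H $ 0 = 0" for H
    by (simp add: tree_gf_nth trees_of_size_0)
  show "tree_gf F $ n = (fps_const (F (Node [])) * fps_X + tree_gf G1 * tree_gf K1 + tree_gf G2 * tree_gf K2) $ n"
  proof (cases "n \<ge> 2")
    case True
    have "tree_gf F $ n = (\<Sum>k\<in>{1..<n}. \<Sum>c\<in>trees_of_size k. \<Sum>r\<in>trees_of_size (n - k).
        G1 c * K1 r + G2 c * K2 r)"
      by (simp add: tree_gf_nth sum_trees_of_size_split[OF True] assms)
    also have "\<dots> = (\<Sum>k\<in>{1..<n}. tree_gf G1 $ k * tree_gf K1 $ (n - k) + tree_gf G2 $ k * tree_gf K2 $ (n - k))"
      by (simp add: tree_gf_nth sum.distrib sum_product)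
    finally show ?thesis
      using True by (simp add: fps_mult_nth_vanishing_at_0 gf0 sum.distrib)
  next
    case False
    then consider "n = 0" | "n = Suc 0" by linarith
    then show ?thesis
      by cases (simp_all add: gf0 tree_gf_nth trees_of_size_0 trees_of_size_1)
  qed
qed

definition catalan_gf :: "real fps" where
  "catalan_gf = tree_gf (\<lambda>_. 1)"

lemma tree_gf_zero: "tree_gf (\<lambda>_. 0) = 0"
  by (rule fps_ext) (simp add: tree_gf_nth)

lemma catalan_gf_eq: "catalan_gf = fps_X + catalan_gf * catalan_gf"
proof -
  have "tree_gf (\<lambda>_. 1) = fps_const 1 * fps_X + tree_gf (\<lambda>_. 1) * tree_gf (\<lambda>_. 1)
      + tree_gf (\<lambda>_. 0) * tree_gf (\<lambda>_. 0)"
    by (rule tree_gf_bilinear_rec) simp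
  then show ?thesis
    unfolding tree_gf_zero catalan_gf_def by simp
qed

text \<open>The leaves of c lie one level deeper in add_first_child c r, which turns g into g + h on
  them; the root of r is a leaf of r only if r is a single vertex, and is no leaf afterwards.\<close>

lemma tree_gf_leaf_depth_sum:
  assumes "\<And>d. g (Suc d) = g d + h d"
  shows "tree_gf (leaf_depth_sum g) =
    fps_const (g 0) * fps_X + (tree_gf (leaf_depth_sum g) + tree_gf (leaf_depth_sum h)) * catalan_gf
    + catalan_gf * (tree_gf (leaf_depth_sum g) - fps_const (g 0) * fps_X)"
proof -
  have "tree_gf (leaf_depth_sum g) = fps_const (leaf_depth_sum g (Node [])) * fps_X
      + tree_gf (\<lambda>c. leaf_depth_sum g c + leaf_depth_sum h c) * tree_gf (\<lambda>_. 1)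
      + tree_gf (\<lambda>_. 1) * tree_gf (\<lambda>r. leaf_depth_sum g r - (if r = Node [] then g 0 else 0))"
    by (rule tree_gf_bilinear_rec)
      (simp only: leaf_depth_sum_add_first_child assms leaf_depth_sum_add mult_1 mult_1_right)
  then show ?thesis
    unfolding tree_gf_add tree_gf_diff tree_gf_single_vertex_indicator leaf_depth_sum_single_vertex
      catalan_gf_def .
qed

definition leaf_count_gf :: "real fps" where
  "leaf_count_gf = tree_gf (leaf_depth_sum (\<lambda>_. 1))"

definition pair_count_gf :: "real fps" where
  "pair_count_gf = tree_gf (leaf_depth_sum real)"

definition pair_dist_gf :: "real fps" where
  "pair_dist_gf = tree_gf (leaf_depth_sum (\<lambda>d. real d * (real d + 1) / 2))"

lemma leaf_count_gf_eq:
  "leaf_count_gf = fps_X + leaf_count_gf * catalan_gf + catalan_gf * (leaf_count_gf - fps_X)"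
proof -
  have "leaf_depth_sum (\<lambda>_. 0) = (\<lambda>_. 0)"
    by (simp add: fun_eq_iff leaf_depth_sum_def)
  then have "tree_gf (leaf_depth_sum (\<lambda>_. 0)) = 0"
    by (simp add: tree_gf_zero)
  then show ?thesis
    using tree_gf_leaf_depth_sum[of "\<lambda>_. 1" "\<lambda>_. 0", simplified]
    unfolding leaf_count_gf_def by simp
qed

lemma pair_count_gf_eq:
  "pair_count_gf = (pair_count_gf + leaf_count_gf) * catalan_gf + catalan_gf * pair_count_gf"
  using tree_gf_leaf_depth_sum[of real "\<lambda>_. 1"]
  by (simp add: pair_count_gf_def leaf_count_gf_def)

lemma pair_dist_gf_eq:
  "pair_dist_gf = (pair_dist_gf + pair_count_gf + leaf_count_gf) * catalan_gf + catalan_gf * pair_dist_gf"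
proof -
  have "real (Suc d) * (real (Suc d) + 1) / 2 = real d * (real d + 1) / 2 + (real d + 1)" for d
    by (simp add: field_simps)
  note rec = tree_gf_leaf_depth_sum[of "\<lambda>d. real d * (real d + 1) / 2" "\<lambda>d. real d + 1", OF this]
  have "leaf_depth_sum (\<lambda>d. real d + 1) = (\<lambda>t. leaf_depth_sum real t + leaf_depth_sum (\<lambda>_. 1) t)"
    by (rule ext) (rule leaf_depth_sum_add)
  then have "tree_gf (leaf_depth_sum (\<lambda>d. real d + 1)) = pair_count_gf + leaf_count_gf"
    by (simp only: tree_gf_add pair_count_gf_def leaf_count_gf_def)
  then show ?thesis
    using rec by (simp add: pair_dist_gf_def add.assoc)
qed

section \<open>The central binomial series\<close>

abbreviation central_binom :: "nat \<Rightarrow> real" where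
  "central_binom k \<equiv> real ((2 * k) choose k)"

lemma central_binom_eq_fact: "central_binom k = fact (2 * k) / (fact k)\<^sup>2"
  by (simp add: binomial_fact power2_eq_square)

lemma central_binomial_Suc: "Suc k * ((2 * Suc k) choose Suc k) = 2 * (2 * k + 1) * ((2 * k) choose k)"
proof -
  have F: "fact k * fact k * Suc k \<noteq> (0::nat)" by simp
  have "fact (Suc k) * fact (Suc k) * ((2 * Suc k) choose Suc k) = fact (2 * Suc k)"
    using binomial_fact_lemma[of "Suc k" "2 * Suc k"] by (simp del: binomial_Suc_Suc)
  also have "fact (2 * Suc k) = (2 * k + 2) * (2 * k + 1) * (fact k * fact k * ((2 * k) choose k))"
    using binomial_fact_lemma[of k "2 * k"] by (simp add: algebra_simps)
  finally have "(fact k * fact k * Suc k) * (Suc k * ((2 * Suc k) choose Suc k))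
      = (fact k * fact k * Suc k) * (2 * (2 * k + 1) * ((2 * k) choose k))"
    by (simp add: algebra_simps del: binomial_Suc_Suc)
  then show ?thesis
    using F mult_left_cancel by blast
qed

lemma central_binom_Suc: "(real k + 1) * central_binom (Suc k) = 2 * (2 * real k + 1) * central_binom k"
  using arg_cong[OF central_binomial_Suc[of k], of real] by (simp add: algebra_simps del: binomial_Suc_Suc)

lemma gbinomial_Suc_right:
  "(a :: 'a::field_char_0) gchoose (Suc k) = (a gchoose k) * (a - of_nat k) / (of_nat k + 1)"
proof -
  have "fact (Suc k) * (a gchoose Suc k) = (\<Prod>i = 0..<Suc k. a - of_nat i)"
    by (rule gbinomial_mult_fact)
  also have "\<dots> = fact k * ((a gchoose k) * (a - of_nat k))"
    by (simp add: gbinomial_mult_fact)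
  finally have "fact k * ((of_nat k + 1) * (a gchoose Suc k)) = fact k * ((a gchoose k) * (a - of_nat k))"
    by (simp add: algebra_simps)
  then have "(of_nat k + 1) * (a gchoose Suc k) = (a gchoose k) * (a - of_nat k)"
    by simp
  moreover have "(of_nat k + 1 :: 'a) \<noteq> 0"
    using of_nat_neq_0[of k] by (simp add: add.commute)
  ultimately show ?thesis
    by (simp add: field_simps)
qed

lemma gbinomial_minus_half: "((- (1/2) :: real) gchoose k) = (- (1/4)) ^ k * central_binom k"
proof (induction k)
  case (Suc k)
  have nz: "real k + 1 \<noteq> 0"
    by simp
  have "(real k + 1) * ((- (1/2) :: real) gchoose Suc k) = (real k + 1) * ((- (1/4)) ^ Suc k * central_binom (Suc k))"
    unfolding gbinomial_Suc_right Suc mult.left_commute[of _ "(- (1/4)) ^ Suc k"] central_binom_Suc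
    by (simp add: field_simps)
  then show ?case
    using mult_left_cancel[OF nz] by blast
qed simp

lemma sum_central_binom_convolution: "(\<Sum>k=0..n. central_binom k * central_binom (n - k)) = 4 ^ n"
proof -
  have "(- (1/4) :: real) ^ n * (\<Sum>k=0..n. central_binom k * central_binom (n - k))
      = (\<Sum>k=0..n. ((- (1/2) :: real) gchoose k) * ((- (1/2)) gchoose (n - k)))"
    unfolding sum_distrib_left
  proof (intro sum.cong refl)
    fix k assume "k \<in> {0..n}"
    then have "(- (1/4) :: real) ^ n = (- (1/4)) ^ k * (- (1/4)) ^ (n - k)"
      by (simp flip: power_add)
    then show "(- (1/4)) ^ n * (central_binom k * central_binom (n - k))
        = ((- (1/2)) gchoose k) * ((- (1/2)) gchoose (n - k))"
      by (simp add: gbinomial_minus_half)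
  qed
  also have "\<dots> = (-1) gchoose n"
    by (simp add: gbinomial_Vandermonde)
  also have "\<dots> = (- (1/4) :: real) ^ n * 4 ^ n"
    using gbinomial_minus[of "1::real" n]
    by (simp add: binomial_gbinomial[symmetric] power_mult_distrib[symmetric])
  finally show ?thesis
    by simp
qed

definition central_binom_gf :: "real fps" where
  "central_binom_gf = Abs_fps central_binom"

definition pow4_gf :: "real fps" where
  "pow4_gf = Abs_fps (\<lambda>n. 4 ^ n)"

definition weighted_central_binom_gf :: "real fps" where
  "weighted_central_binom_gf = Abs_fps (\<lambda>n. (2 * real n + 1) * central_binom n)"

lemma fps_mult_one_minus_4X_nth:
  fixes f :: "real fps"
  shows "(f * (1 - 4 * fps_X)) $ n = f $ n - (if n = 0 then 0 else 4 * f $ (n - 1))"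
proof -
  have "f * (1 - 4 * fps_X) = f - fps_const 4 * (fps_X * f)"
    by (simp add: algebra_simps numeral_fps_const)
  then show ?thesis
    by simp
qed

lemma one_minus_4X_neq_0: "(1 - 4 * fps_X :: real fps) \<noteq> 0"
proof
  assume "(1 - 4 * fps_X :: real fps) = 0"
  then have "(1 - 4 * fps_X :: real fps) $ 0 = 0"
    by simp
  then show False
    by (simp add: numeral_fps_const)
qed

lemma central_binom_gf_square: "central_binom_gf * central_binom_gf = pow4_gf"
  by (rule fps_ext) (simp add: central_binom_gf_def pow4_gf_def fps_mult_nth sum_central_binom_convolution)

lemma pow4_gf_mult_one_minus_4X: "pow4_gf * (1 - 4 * fps_X) = 1"
proof (rule fps_ext)
  fix n
  show "(pow4_gf * (1 - 4 * fps_X)) $ n = 1 $ n"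
    by (cases n) (simp_all add: fps_mult_one_minus_4X_nth pow4_gf_def)
qed

lemma weighted_central_binom_gf_mult_one_minus_4X:
  "weighted_central_binom_gf * (1 - 4 * fps_X) = central_binom_gf"
proof (rule fps_ext)
  fix n
  show "(weighted_central_binom_gf * (1 - 4 * fps_X)) $ n = central_binom_gf $ n"
  proof (cases n)
    case (Suc k)
    have "(2 * real (Suc k) + 1) * central_binom (Suc k) - 4 * ((2 * real k + 1) * central_binom k)
        = central_binom (Suc k)"
      using central_binom_Suc[of k] by (simp add: algebra_simps)
    then show ?thesis
      using Suc by (simp add: fps_mult_one_minus_4X_nth weighted_central_binom_gf_def central_binom_gf_def)
  qed (simp add: fps_mult_one_minus_4X_nth weighted_central_binom_gf_def central_binom_gf_def)
qed

lemma pow4_gf_mult_central_binom_gf: "pow4_gf * central_binom_gf = weighted_central_binom_gf"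
proof -
  have "(pow4_gf * central_binom_gf - weighted_central_binom_gf) * (1 - 4 * fps_X)
      = central_binom_gf * (pow4_gf * (1 - 4 * fps_X)) - weighted_central_binom_gf * (1 - 4 * fps_X)"
    by (simp add: algebra_simps)
  also have "\<dots> = 0"
    by (simp add: pow4_gf_mult_one_minus_4X weighted_central_binom_gf_mult_one_minus_4X)
  finally have "(pow4_gf * central_binom_gf - weighted_central_binom_gf) * (1 - 4 * fps_X) = 0" .
  then show ?thesis
    using one_minus_4X_neq_0 by simp
qed

text \<open>1 - 2 C is the power series square root of 1 - 4X, whose reciprocal is the central
  binomial series: both squares are inverse to each other and the constant term decides the sign.\<close>

lemma catalan_gf_square_root: "(1 - 2 * catalan_gf) * (1 - 2 * catalan_gf) = 1 - 4 * fps_X"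
  using catalan_gf_eq by algebra

lemma catalan_gf_mult_central_binom_gf: "(1 - 2 * catalan_gf) * central_binom_gf = 1"
proof -
  let ?p = "(1 - 2 * catalan_gf) * central_binom_gf"
  have "?p * ?p = ((1 - 2 * catalan_gf) * (1 - 2 * catalan_gf)) * (central_binom_gf * central_binom_gf)"
    by (simp only: ac_simps)
  also have "\<dots> = 1"
    unfolding catalan_gf_square_root central_binom_gf_square
    using pow4_gf_mult_one_minus_4X by (simp only: mult.commute)
  finally have "(?p - 1) * (?p + 1) = 0"
    by (simp add: algebra_simps)
  moreover have "(?p + 1) $ 0 \<noteq> 0"
    by (simp add: catalan_gf_def tree_gf_nth trees_of_size_0 central_binom_gf_def)
  ultimately show ?thesis
    by (metis fps_zero_nth mult_eq_0_iff right_minus_eq)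
qed

lemma leaf_count_gf_solution: "2 * leaf_count_gf = fps_X * (central_binom_gf + 1)"
  using leaf_count_gf_eq catalan_gf_mult_central_binom_gf by algebra

lemma pair_count_gf_solution: "4 * pair_count_gf = fps_X * (pow4_gf - 1)"
  using pair_count_gf_eq leaf_count_gf_solution catalan_gf_mult_central_binom_gf central_binom_gf_square
  by algebra

lemma pair_dist_gf_solution:
  "8 * pair_dist_gf = fps_X * (weighted_central_binom_gf + pow4_gf - central_binom_gf - 1)"
  using pair_dist_gf_eq pair_count_gf_solution leaf_count_gf_solution catalan_gf_mult_central_binom_gf
    central_binom_gf_square pow4_gf_mult_central_binom_gf
  by algebra

lemma pair_count_gf_nth: "pair_count_gf $ (m + 2) = 4 ^ m"
proof -
  have "(4 * pair_count_gf) $ (m + 2) = 4 ^ Suc m"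
    unfolding pair_count_gf_solution by (simp add: numeral_fps_const pow4_gf_def)
  then show ?thesis
    by (simp add: numeral_fps_const)
qed

lemma pair_dist_gf_nth: "pair_dist_gf $ (m + 2) = (2 * real m + 1) * central_binom m / 2 + 4 ^ m / 2"
proof -
  have "(8 * pair_dist_gf) $ (m + 2) =
      (2 * real (Suc m) + 1) * central_binom (Suc m) + 4 ^ Suc m - central_binom (Suc m)"
    unfolding pair_dist_gf_solution
    by (simp add: numeral_fps_const pow4_gf_def weighted_central_binom_gf_def central_binom_gf_def
        del: binomial_Suc_Suc)
  also have "\<dots> = 2 * ((real m + 1) * central_binom (Suc m)) + 4 * 4 ^ m"
    by (simp add: algebra_simps del: binomial_Suc_Suc)
  also have "\<dots> = 4 * (2 * real m + 1) * central_binom m + 4 * 4 ^ m"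
    unfolding central_binom_Suc by simp
  finally show ?thesis
    by (simp add: numeral_fps_const field_simps del: binomial_Suc_Suc)
qed

section \<open>Wallis bounds and double factorials\<close>

definition wallis_ratio :: "nat \<Rightarrow> real" where
  "wallis_ratio m = central_binom m / 4 ^ m"

lemma wallis_ratio_pos: "wallis_ratio m > 0"
  by (simp add: wallis_ratio_def zero_less_binomial)

lemma wallis_ratio_Suc: "(2 * real m + 2) * wallis_ratio (Suc m) = (2 * real m + 1) * wallis_ratio m"
proof -
  have "(2 * real m + 2) * central_binom (Suc m) = 4 * ((2 * real m + 1) * central_binom m)"
    using central_binom_Suc[of m] by (simp add: algebra_simps del: binomial_Suc_Suc)
  then show ?thesis
    unfolding wallis_ratio_def by (simp add: field_simps del: binomial_Suc_Suc)
qed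

lemma wallis_product_mult_wallis_ratio:
  "(\<Prod>k=1..m. 4 * real k ^ 2 / (4 * real k ^ 2 - 1)) * ((2 * real m + 1) * wallis_ratio m ^ 2) = 1"
proof (induction m)
  case (Suc m)
  define x where "x = wallis_ratio m"
  define y where "y = wallis_ratio (Suc m)"
  define A where "A = 2 * real m + 1"
  define B where "B = 2 * real m + 3"
  define C where "C = 2 * real m + 2"
  have sq: "C ^ 2 * y ^ 2 = A ^ 2 * x ^ 2"
    unfolding x_def y_def A_def C_def power_mult_distrib[symmetric] wallis_ratio_Suc ..
  have "A > 0" "B > 0"
    unfolding A_def B_def by linarith+
  have "4 * real (Suc m) ^ 2 / (4 * real (Suc m) ^ 2 - 1) * ((2 * real (Suc m) + 1) * y ^ 2)
      = C ^ 2 / (A * B) * (B * y ^ 2)"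
    by (simp add: A_def B_def C_def power2_eq_square algebra_simps)
  also have "\<dots> = C ^ 2 * y ^ 2 / A"
    using \<open>B > 0\<close> by simp
  also have "\<dots> = A * x ^ 2"
    unfolding sq using \<open>A > 0\<close> by (simp add: power2_eq_square)
  finally have step: "4 * real (Suc m) ^ 2 / (4 * real (Suc m) ^ 2 - 1) * ((2 * real (Suc m) + 1) * y ^ 2)
      = (2 * real m + 1) * x ^ 2"
    by (simp only: A_def)
  have "(\<Prod>k=1..Suc m. 4 * real k ^ 2 / (4 * real k ^ 2 - 1)) =
      4 * real (Suc m) ^ 2 / (4 * real (Suc m) ^ 2 - 1) * (\<Prod>k=1..m. 4 * real k ^ 2 / (4 * real k ^ 2 - 1))"
    by (rule prod.nat_ivl_Suc') simp
  then have "(\<Prod>k=1..Suc m. 4 * real k ^ 2 / (4 * real k ^ 2 - 1)) * ((2 * real (Suc m) + 1) * y ^ 2)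
      = (\<Prod>k=1..m. 4 * real k ^ 2 / (4 * real k ^ 2 - 1)) * ((2 * real m + 1) * x ^ 2)"
    unfolding step[symmetric] by (simp only: mult_ac)
  then show ?case
    using Suc.IH by (simp only: x_def y_def)
qed (simp add: wallis_ratio_def)

lemma odd_wallis_ratio_sq_tendsto: "(\<lambda>m. (2 * real m + 1) * wallis_ratio m ^ 2) \<longlonglongrightarrow> 2 / pi"
proof -
  have "(\<lambda>m. 1 / (\<Prod>k=1..m. 4 * real k ^ 2 / (4 * real k ^ 2 - 1))) \<longlonglongrightarrow> 1 / (pi / 2)"
    by (intro tendsto_divide tendsto_const wallis) simp
  moreover have "1 / (\<Prod>k=1..m. 4 * real k ^ 2 / (4 * real k ^ 2 - 1)) = (2 * real m + 1) * wallis_ratio m ^ 2" for m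
  proof -
    note prod_eq = wallis_product_mult_wallis_ratio[of m]
    then have "(\<Prod>k=1..m. 4 * real k ^ 2 / (4 * real k ^ 2 - 1)) \<noteq> 0"
      by (metis mult_zero_left zero_neq_one)
    with prod_eq show ?thesis
      by (simp add: field_simps)
  qed
  ultimately show ?thesis
    by simp
qed

text \<open>Both sequences below converge to 2 / pi, one from above and one from below, which squeezes
  wallis_ratio m ^ 2 between 2 / (pi (2m + 1)) and 1 / (pi m).\<close>

lemma decseq_odd_wallis_ratio_sq: "decseq (\<lambda>m. (2 * real m + 1) * wallis_ratio m ^ 2)"
proof (rule decseq_SucI)
  fix m
  define x where "x = wallis_ratio m"
  define y where "y = wallis_ratio (Suc m)"
  define A where "A = 2 * real m + 1"
  define B where "B = 2 * real m + 3"
  define C where "C = 2 * real m + 2"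
  have sq: "C ^ 2 * y ^ 2 = A ^ 2 * x ^ 2"
    unfolding x_def y_def A_def C_def power_mult_distrib[symmetric] wallis_ratio_Suc ..
  have "B * A \<le> C ^ 2"
    by (simp add: A_def B_def C_def power2_eq_square algebra_simps)
  have "C ^ 2 * (B * y ^ 2) = B * (C ^ 2 * y ^ 2)"
    by (simp only: mult_ac)
  also have "\<dots> = (B * A) * (A * x ^ 2)"
    unfolding sq by (simp only: power2_eq_square mult_ac)
  also have "\<dots> \<le> C ^ 2 * (A * x ^ 2)"
    using \<open>B * A \<le> C ^ 2\<close> by (rule mult_right_mono) (simp add: A_def)
  finally have "C ^ 2 * (B * y ^ 2) \<le> C ^ 2 * (A * x ^ 2)" .
  moreover have "C ^ 2 > 0"
    unfolding C_def by (simp add: add_pos_nonneg)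
  ultimately have "B * y ^ 2 \<le> A * x ^ 2"
    by simp
  then show "(2 * real (Suc m) + 1) * wallis_ratio (Suc m) ^ 2 \<le> (2 * real m + 1) * wallis_ratio m ^ 2"
    by (simp add: A_def B_def x_def y_def algebra_simps)
qed

lemma incseq_even_wallis_ratio_sq: "incseq (\<lambda>m. 2 * real m * wallis_ratio m ^ 2)"
proof (rule incseq_SucI)
  fix m
  define x where "x = wallis_ratio m"
  define y where "y = wallis_ratio (Suc m)"
  define A where "A = 2 * real m + 1"
  define C where "C = 2 * real m + 2"
  have sq: "C ^ 2 * y ^ 2 = A ^ 2 * x ^ 2"
    unfolding x_def y_def A_def C_def power_mult_distrib[symmetric] wallis_ratio_Suc ..
  have "C * (2 * real m) \<le> A ^ 2"
    by (simp add: A_def C_def power2_eq_square algebra_simps)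
  have "C ^ 2 * (2 * real m * x ^ 2) = (C * (2 * real m)) * (C * x ^ 2)"
    by (simp only: power2_eq_square mult_ac)
  also have "\<dots> \<le> A ^ 2 * (C * x ^ 2)"
    using \<open>C * (2 * real m) \<le> A ^ 2\<close> by (rule mult_right_mono) (simp add: C_def)
  also have "\<dots> = C ^ 2 * (C * y ^ 2)"
    unfolding power2_eq_square using sq by (simp add: power2_eq_square mult_ac)
  finally have "C ^ 2 * (2 * real m * x ^ 2) \<le> C ^ 2 * (C * y ^ 2)" .
  moreover have "C ^ 2 > 0"
    unfolding C_def by (simp add: add_pos_nonneg)
  ultimately have "2 * real m * x ^ 2 \<le> C * y ^ 2"
    by simp
  then show "2 * real m * wallis_ratio m ^ 2 \<le> 2 * real (Suc m) * wallis_ratio (Suc m) ^ 2"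
    by (simp add: C_def x_def y_def algebra_simps)
qed

lemma even_wallis_ratio_sq_tendsto: "(\<lambda>m. 2 * real m * wallis_ratio m ^ 2) \<longlonglongrightarrow> 2 / pi"
proof -
  have "(\<lambda>m. 2 * real m / (2 * real m + 1)) \<longlonglongrightarrow> 1"
    by real_asymp
  then have "(\<lambda>m. (2 * real m + 1) * wallis_ratio m ^ 2 * (2 * real m / (2 * real m + 1))) \<longlonglongrightarrow> 2 / pi * 1"
    by (intro tendsto_mult odd_wallis_ratio_sq_tendsto)
  moreover have "(2 * real m + 1) * wallis_ratio m ^ 2 * (2 * real m / (2 * real m + 1))
      = 2 * real m * wallis_ratio m ^ 2" for m
    by (simp add: field_simps add_pos_nonneg)
  ultimately show ?thesis
    by (simp only: mult_1_right)
qed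

lemma odd_wallis_ratio_sq_lower_bound: "2 / pi \<le> (2 * real m + 1) * wallis_ratio m ^ 2"
  by (rule decseq_ge[OF decseq_odd_wallis_ratio_sq odd_wallis_ratio_sq_tendsto])

lemma even_wallis_ratio_sq_upper_bound: "2 * real m * wallis_ratio m ^ 2 \<le> 2 / pi"
  by (rule incseq_le[OF incseq_even_wallis_ratio_sq even_wallis_ratio_sq_tendsto])

lemma dfact_even: "dfact (2 * m) = 2 ^ m * fact m"
  by (induction m) (simp_all add: algebra_simps)

lemma dfact_odd: "dfact (2 * m + 1) * (2 ^ m * fact m) = fact (2 * m + 1)"
proof (induction m)
  case (Suc m)
  have e: "2 * Suc m + 1 = Suc (Suc (2 * m + 1))"
    by simp
  have "dfact (2 * Suc m + 1) * (2 ^ Suc m * fact (Suc m))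
      = (2 * m + 3) * (2 * m + 2) * (dfact (2 * m + 1) * (2 ^ m * fact m))"
    unfolding e by (simp add: algebra_simps)
  also have "\<dots> = fact (2 * Suc m + 1)"
    unfolding Suc e by (simp add: algebra_simps)
  finally show ?case .
qed simp

lemma dfact_ratio:
  "real (dfact (2 * m + 1)) / (2 * real (dfact (2 * m))) = (2 * real m + 1) * wallis_ratio m / 2"
proof -
  define D where "D = real (dfact (2 * m + 1))"
  define F :: real where "F = fact m"
  define P :: real where "P = 2 ^ m"
  have "F > 0" "P > 0"
    by (simp_all add: F_def P_def)
  have "D * (P * F) = (2 * real m + 1) * fact (2 * m)"
    using arg_cong[OF dfact_odd[of m], of real] by (simp add: D_def F_def P_def algebra_simps)
  also have "\<dots> = (2 * real m + 1) * central_binom m * F * F"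
    by (simp add: central_binom_eq_fact F_def power2_eq_square)
  finally have "D * P = (2 * real m + 1) * central_binom m * F"
    using \<open>F > 0\<close> by (simp add: mult.assoc mult.left_commute[of _ F])
  moreover have "real (dfact (2 * m)) = P * F" "(4 :: real) ^ m = P * P"
    by (simp_all add: dfact_even P_def F_def flip: power_mult_distrib)
  ultimately show ?thesis
    using \<open>F > 0\<close> \<open>P > 0\<close> by (simp add: D_def wallis_ratio_def field_simps)
qed

lemma sqrt_approx_from_square_bounds:
  fixes a x :: real
  assumes "x > 0" "a \<ge> 0" and lower: "x / pi - 3 / (2 * pi) \<le> a ^ 2" and upper: "a ^ 2 \<le> x / pi"
  shows "\<bar>a - sqrt (x / pi)\<bar> \<le> 1 / sqrt x"
proof -
  define S where "S = sqrt (x / pi)"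
  have "a \<le> S"
    unfolding S_def using upper by (rule real_le_rsqrt)
  have "(S - a) * (S + a) = S ^ 2 - a ^ 2"
    by (simp add: power2_eq_square algebra_simps)
  also have "\<dots> \<le> 3 / (2 * pi)"
    using lower \<open>x > 0\<close> by (simp add: S_def)
  also have "\<dots> \<le> 1 / 2"
    using pi_gt3 by (simp add: field_simps)
  finally have "(S - a) * (S + a) \<le> 1 / 2" .
  moreover have "sqrt x / 2 \<le> S"
  proof -
    have "sqrt pi \<le> 2"
      using real_sqrt_le_mono[of pi 4] pi_less_4 by simp
    then show ?thesis
      unfolding S_def real_sqrt_divide using \<open>x > 0\<close> by (intro divide_left_mono) auto
  qed
  then have "(S - a) * (sqrt x / 2) \<le> (S - a) * (S + a)"
    using \<open>a \<le> S\<close> \<open>a \<ge> 0\<close> by (intro mult_left_mono) simp_all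
  ultimately have "S - a \<le> 1 / sqrt x"
    using \<open>x > 0\<close> by (simp add: pos_le_divide_eq)
  then show ?thesis
    using \<open>a \<le> S\<close> by (simp add: S_def)
qed

lemma wallis_ratio_approx:
  assumes "m \<ge> 1"
  shows "\<bar>(2 * real m + 1) * wallis_ratio m / 2 - sqrt ((real m + 2) / pi)\<bar> \<le> 1 / sqrt (real m + 2)"
proof (rule sqrt_approx_from_square_bounds)
  let ?a = "(2 * real m + 1) * wallis_ratio m / 2"
  have "(real m + 2) / pi - 3 / (2 * pi) = (2 * real m + 1) / 4 * (2 / pi)"
    by (simp add: field_simps)
  also have "\<dots> \<le> (2 * real m + 1) / 4 * ((2 * real m + 1) * wallis_ratio m ^ 2)"
    by (intro mult_left_mono odd_wallis_ratio_sq_lower_bound) simp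
  also have "\<dots> = ?a ^ 2"
    by (simp add: power2_eq_square)
  finally show "(real m + 2) / pi - 3 / (2 * pi) \<le> ?a ^ 2" .
  have "?a ^ 2 = (2 * real m + 1) ^ 2 / (8 * real m) * (2 * real m * wallis_ratio m ^ 2)"
    using assms by (simp add: field_simps power2_eq_square)
  also have "\<dots> \<le> (2 * real m + 1) ^ 2 / (8 * real m) * (2 / pi)"
    by (intro mult_left_mono even_wallis_ratio_sq_upper_bound) simp
  also have "\<dots> \<le> (real m + 2) / pi"
    using assms by (simp add: field_simps power2_eq_square)
  finally show "?a ^ 2 \<le> (real m + 2) / pi" .
qed (use wallis_ratio_pos[of m] in auto)

section \<open>Ancestor-leaf pairs in trees of given size\<close>

definition total_anc_leaf_pairs :: "nat \<Rightarrow> nat" where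
  "total_anc_leaf_pairs n = (\<Sum>t\<in>trees_of_size n. card (anc_leaf_pairs t))"

definition total_anc_leaf_dist :: "nat \<Rightarrow> nat" where
  "total_anc_leaf_dist n = (\<Sum>t\<in>trees_of_size n. \<Sum>(u, l)\<in>anc_leaf_pairs t. tdist u l)"

lemma total_anc_leaf_pairs_eq: "total_anc_leaf_pairs (m + 2) = 4 ^ m"
proof -
  have "real (total_anc_leaf_pairs (m + 2)) = pair_count_gf $ (m + 2)"
    by (simp add: total_anc_leaf_pairs_def pair_count_gf_def tree_gf_nth card_anc_leaf_pairs)
  then have "real (total_anc_leaf_pairs (m + 2)) = real (4 ^ m)"
    unfolding pair_count_gf_nth by simp
  then show ?thesis
    by (simp only: of_nat_eq_iff)
qed

lemma total_anc_leaf_dist_eq: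
  "real (total_anc_leaf_dist (m + 2)) = (2 * real m + 1) * central_binom m / 2 + 4 ^ m / 2"
  unfolding total_anc_leaf_dist_def of_nat_sum[of _ "trees_of_size (m + 2)"] sum_tdist_anc_leaf_pairs
  by (simp add: pair_dist_gf_def tree_gf_nth flip: pair_dist_gf_nth)

lemma mean_anc_leaf_dist:
  "real (total_anc_leaf_dist (m + 2)) / real (total_anc_leaf_pairs (m + 2))
     = (2 * real m + 1) * wallis_ratio m / 2 + 1 / 2"
  unfolding total_anc_leaf_dist_eq total_anc_leaf_pairs_eq by (simp add: wallis_ratio_def field_simps)

lemma mean_anc_leaf_dist_asymptotics:
  "(\<lambda>n. real (total_anc_leaf_dist n) / real (total_anc_leaf_pairs n) - sqrt (real n / pi) - 1 / 2)
     \<in> O(\<lambda>n. 1 / sqrt (real n))"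
proof (intro bigoI[where c = 1] eventually_at_top_linorderI[of 3])
  fix n :: nat
  assume "n \<ge> 3"
  define m where "m = n - 2"
  have n: "n = m + 2" and "m \<ge> 1"
    using \<open>n \<ge> 3\<close> by (simp_all add: m_def)
  show "norm (real (total_anc_leaf_dist n) / real (total_anc_leaf_pairs n) - sqrt (real n / pi) - 1 / 2)
      \<le> 1 * norm (1 / sqrt (real n))"
    unfolding n mean_anc_leaf_dist using wallis_ratio_approx[OF \<open>m \<ge> 1\<close>] by (simp add: add.commute)
qed

theorem mainTheorem9:
  shows "(\<forall>n\<ge>2.
     (\<Sum>t\<in>trees_of_size n. card (anc_leaf_pairs t)) = 4 ^ (n - 2)
   \<and> real (\<Sum>t\<in>trees_of_size n. \<Sum>(u, l)\<in>anc_leaf_pairs t. tdist u l)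
       = fact (2 * n - 3) / (2 * (fact (n - 2))\<^sup>2) + 4 ^ (n - 2) / 2
   \<and> real (\<Sum>t\<in>trees_of_size n. \<Sum>(u, l)\<in>anc_leaf_pairs t. tdist u l)
       / real (\<Sum>t\<in>trees_of_size n. card (anc_leaf_pairs t))
       = real (dfact (2 * n - 3)) / (2 * real (dfact (2 * n - 4))) + 1 / 2)
   \<and> (\<lambda>n. real (\<Sum>t\<in>trees_of_size n. \<Sum>(u, l)\<in>anc_leaf_pairs t. tdist u l)
              / real (\<Sum>t\<in>trees_of_size n. card (anc_leaf_pairs t))
             - sqrt (real n / pi) - 1 / 2)
         \<in> O(\<lambda>n. 1 / sqrt (real n))"
  unfolding total_anc_leaf_pairs_def[symmetric] total_anc_leaf_dist_def[symmetric]
proof (intro conjI allI impI)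
  fix n :: nat
  assume "n \<ge> 2"
  define m where "m = n - 2"
  have idx: "2 * n - 3 = 2 * m + 1" "2 * n - 4 = 2 * m" "n - 2 = m" and n: "n = m + 2"
    using \<open>n \<ge> 2\<close> by (simp_all add: m_def)
  show "total_anc_leaf_pairs n = 4 ^ (n - 2)"
    unfolding idx unfolding n by (rule total_anc_leaf_pairs_eq)
  have "(2 * real m + 1) * central_binom m / 2 = fact (2 * m + 1) / (2 * (fact m)\<^sup>2)"
    unfolding central_binom_eq_fact by (simp add: field_simps)
  then show "real (total_anc_leaf_dist n) = fact (2 * n - 3) / (2 * (fact (n - 2))\<^sup>2) + 4 ^ (n - 2) / 2"
    unfolding idx unfolding n total_anc_leaf_dist_eq by (simp only:)
  show "real (total_anc_leaf_dist n) / real (total_anc_leaf_pairs n)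
      = real (dfact (2 * n - 3)) / (2 * real (dfact (2 * n - 4))) + 1 / 2"
    unfolding idx unfolding n mean_anc_leaf_dist dfact_ratio ..
qed (rule mean_anc_leaf_dist_asymptotics)

end
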